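(* Let $k\ge 3$ and let $S_k$ be the $k\times(2^k-1)$ binary matrix whose columns are all the nonzero vectors of $\mathbb{F}_2^k$. Let $C$ be a binary linear $[n,k,d]$ code with generator matrix $G$, let $m\ge 0$ be an integer, and let $C'$ be the binary code generated by the $k\times(m(2^k-1)+n)$ matrix $$G'=[\underbrace{S_k\,|\,S_k\,|\,\cdots\,|\,S_k}_{m}\,|\,G].$$ Then $C$ is a self-orthogonal $[n,k,d]$ code which is optimal with respect to the Griesmer bound if and only if $C'$ is a self-orthogonal $[N,k,D]$ code with $N=m(2^k-1)+n$ and $D=2^{k-1}m+d$ which is optimal with respect to the Griesmer bound. In particular, $C$ is a self-orthogonal Griesmer code if and only if $C'$ is a self-orthogonal Griesmer code.
   Context: All codes are binary linear codes. A code $C$ is self-orthogonal if $C\subseteq C^\perp$ with respect to the standard inner product $\sum x_iy_i$ over $\mathbb{F}_2$. For positive integers $k,d$ let $g(k,d)=\sum_{i=0}^{k-1}\lceil d/2^i\rceil$ (the Griesmer bound says every binary $[n,k,d]$ code has $n\ge g(k,d)$). A binary $[n,k,d]$ code is a Griesmer code if $n=g(k,d)$, and it is optimal with respect to the Griesmer bound if $g(k,d)\le n<g(k,d+1)$. *)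

theory Defs
  imports Main "HOL-Library.Z2"
begin

text \<open>A k x n binary matrix is a function M :: nat => nat => bit, where M i j is the
entry in row i < k and column j < n (other entries are irrelevant).\<close>

type_synonym bmat = "nat \<Rightarrow> nat \<Rightarrow> bit"

definition gen_code :: "nat \<Rightarrow> nat \<Rightarrow> bmat \<Rightarrow> bit list set" where
  "gen_code k n M = {map (\<lambda>j. \<Sum>i<k. u i * M i j) [0..<n] | u. True}"

definition weight :: "bit list \<Rightarrow> nat" where
  "weight v = length (filter (\<lambda>x. x \<noteq> 0) v)"

definition inner :: "bit list \<Rightarrow> bit list \<Rightarrow> bit" where
  "inner x y = (\<Sum>i<length x. x ! i * y ! i)"

definition self_orthogonal :: "bit list set \<Rightarrow> bool" where
  "self_orthogonal C \<longleftrightarrow> (\<forall>x\<in>C. \<forall>y\<in>C. inner x y = 0)"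

definition is_code :: "bit list set \<Rightarrow> nat \<Rightarrow> nat \<Rightarrow> nat \<Rightarrow> bool" where
  "is_code C n k d \<longleftrightarrow>
     (\<forall>v\<in>C. length v = n) \<and> replicate n 0 \<in> C \<and>
     (\<forall>x\<in>C. \<forall>y\<in>C. map2 (+) x y \<in> C) \<and>
     card C = 2 ^ k \<and>
     d = Min (weight ` (C - {replicate n 0}))"

definition griesmer :: "nat \<Rightarrow> nat \<Rightarrow> nat" where
  "griesmer k d = (\<Sum>i<k. (d + 2 ^ i - 1) div 2 ^ i)"  \<comment> \<open>sum of ceil(d/2^i)\<close>

definition griesmer_optimal :: "nat \<Rightarrow> nat \<Rightarrow> nat \<Rightarrow> bool" where
  "griesmer_optimal n k d \<longleftrightarrow> griesmer k d \<le> n \<and> n < griesmer k (d + 1)"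

definition griesmer_code :: "nat \<Rightarrow> nat \<Rightarrow> nat \<Rightarrow> bool" where
  "griesmer_code n k d \<longleftrightarrow> n = griesmer k d"

text \<open>Simplex-type matrix S_k: column j (0 <= j < 2^k - 1) is the binary expansion
of j+1, so the columns are exactly the nonzero vectors of F_2^k.\<close>
definition simplex_mat :: "nat \<Rightarrow> bmat" where
  "simplex_mat k i j = (if odd ((j + 1) div 2 ^ i) then 1 else 0)"

definition ext_mat :: "nat \<Rightarrow> nat \<Rightarrow> bmat \<Rightarrow> bmat" where
  "ext_mat k m G i j =
     (if j < m * (2 ^ k - 1) then simplex_mat k i (j mod (2 ^ k - 1))
      else G i (j - m * (2 ^ k - 1)))"

end

theory Submission
  imports Defs "HOL-Library.FuncSet"
begin

text \<open>Every nonzero codeword of the simplex code \<open>S_k\<close> has weight \<open>2^(k-1)\<close>, and for \<open>k \<ge> 3\<close>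
any two of its codewords are orthogonal; both follow by recursion on \<open>k\<close>, splitting \<open>F_2^(k+1)\<close>
into the vectors with last coordinate \<open>0\<close> and \<open>1\<close>. Hence appending \<open>m\<close> copies of \<open>S_k\<close> to \<open>G\<close>
keeps the dimension and all inner products, and adds exactly \<open>2^(k-1) m\<close> to the weight of every
nonzero codeword. Finally \<open>\<lceil>(d + 2^(k-1) m) / 2^i\<rceil> = \<lceil>d / 2^i\<rceil> + 2^(k-1-i) m\<close> for \<open>i < k\<close>, so
\<open>g(k, d + 2^(k-1) m) = g(k, d) + m (2^k - 1)\<close>: the Griesmer bounds move by exactly the added
length.\<close>

(* By default simp turns + and * on bit into XOR and AND; the proofs below work with the field laws. *)
declare add_bit_eq_xor [simp del] mult_bit_eq_and [simp del]

definition binary_digit :: "nat \<Rightarrow> nat \<Rightarrow> bit" where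
  "binary_digit x i = (if odd (x div 2 ^ i) then 1 else 0)"

(* A vector of F_2^k is encoded by the number x < 2^k whose binary digits are its coordinates:
   dot_binary k u x is the dot product of u with it, and column j of simplex_mat k encodes j + 1. *)
definition dot_binary :: "nat \<Rightarrow> (nat \<Rightarrow> bit) \<Rightarrow> nat \<Rightarrow> bit" where
  "dot_binary k u x = (\<Sum>i<k. u i * binary_digit x i)"

lemma sum_lessThan_add:
  "(\<Sum>x<a + b. f x) = (\<Sum>x<a. f x) + (\<Sum>x<b. f (x + a))" for a b :: nat
  by (induction b) (simp_all add: ac_simps)

lemma binary_digit_add_pow2_low:
  assumes "i < k"
  shows "binary_digit (x + 2 ^ k) i = binary_digit x i"
proof -
  have "(2::nat) ^ k = 2 ^ (k - i) * 2 ^ i" using assms by (simp flip: power_add)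
  then have "(x + 2 ^ k) div 2 ^ i = x div 2 ^ i + 2 ^ (k - i)" by simp
  then show ?thesis using assms by (simp add: binary_digit_def)
qed

lemma binary_digit_add_pow2_top: "x < 2 ^ k \<Longrightarrow> binary_digit (x + 2 ^ k) k = 1"
  by (simp add: binary_digit_def div_add_self2)

lemma dot_binary_zero [simp]: "dot_binary k u 0 = 0"
  by (simp add: dot_binary_def binary_digit_def)

lemma dot_binary_Suc_low: "x < 2 ^ k \<Longrightarrow> dot_binary (Suc k) u x = dot_binary k u x"
  by (simp add: dot_binary_def binary_digit_def)

lemma dot_binary_Suc_high:
  "x < 2 ^ k \<Longrightarrow> dot_binary (Suc k) u (x + 2 ^ k) = dot_binary k u x + u k"
  by (simp add: dot_binary_def binary_digit_add_pow2_low binary_digit_add_pow2_top)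

lemma sum_dot_binary_Suc:
  "(\<Sum>x<2 ^ Suc k. h (dot_binary (Suc k) u x) (dot_binary (Suc k) v x)) =
     (\<Sum>x<2 ^ k. h (dot_binary k u x) (dot_binary k v x)) +
     (\<Sum>x<2 ^ k. h (dot_binary k u x + u k) (dot_binary k v x + v k))"
  unfolding power_Suc mult_2 sum_lessThan_add
  by (intro arg_cong2[where f = "(+)"] sum.cong)
    (simp_all add: dot_binary_Suc_low dot_binary_Suc_high)

lemma bit_add_self [simp]: "a + a = (0::bit)"
  by (cases a) (simp_all flip: one_add_one)

lemma of_nat_pow2_bit: "0 < j \<Longrightarrow> (of_nat (2 ^ j) :: bit) = 0"
  by (cases j) simp_all

lemma sum_dot_binary:
  assumes "2 \<le> k"
  shows "(\<Sum>x<2 ^ k. dot_binary k u x) = 0"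
proof -
  obtain j where k: "k = Suc j" and "0 < j" using assms by (cases k) auto
  have "(\<Sum>x<2 ^ k. dot_binary k u x) =
      (\<Sum>x<2 ^ j. dot_binary j u x) + (\<Sum>x<2 ^ j. dot_binary j u x + u j)"
    using sum_dot_binary_Suc[of "\<lambda>a b. a" j u u] by (simp add: k)
  also have "\<dots> = of_nat (2 ^ j) * u j"
    by (simp add: sum.distrib add.assoc[symmetric])
  finally show ?thesis using \<open>0 < j\<close> by (simp add: of_nat_pow2_bit)
qed

lemma sum_dot_binary_mult:
  assumes "3 \<le> k"
  shows "(\<Sum>x<2 ^ k. dot_binary k u x * dot_binary k v x) = 0"
proof -
  obtain j where k: "k = Suc j" and "2 \<le> j" using assms by (cases k) auto
  have "(\<Sum>x<2 ^ k. dot_binary k u x * dot_binary k v x) =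
      (\<Sum>x<2 ^ j. dot_binary j u x * dot_binary j v x) +
      (\<Sum>x<2 ^ j. (dot_binary j u x + u j) * (dot_binary j v x + v j))"
    using sum_dot_binary_Suc[of "(*)" j u v] by (simp add: k)
  also have "\<dots> = (\<Sum>x<2 ^ j. dot_binary j u x) * v j + (\<Sum>x<2 ^ j. dot_binary j v x) * u j
      + of_nat (2 ^ j) * (u j * v j)"
  proof -
    have "(f + a) * (g + b) = f * g + (f * b + g * a + a * b)" for f g a b :: bit
      by (simp add: algebra_simps)
    then show ?thesis
      by (simp add: sum.distrib sum_distrib_right add.assoc[symmetric])
  qed
  finally show ?thesis using \<open>2 \<le> j\<close> by (simp add: sum_dot_binary of_nat_pow2_bit)
qed

lemma count_dot_binary_nonzero:
  "\<exists>i<k. u i \<noteq> 0 \<Longrightarrow> (\<Sum>x<2 ^ k. of_bool (dot_binary k u x \<noteq> 0) :: nat) = 2 ^ (k - 1)"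
proof (induction k)
  case 0
  then show ?case by simp
next
  case (Suc k)
  have split: "(\<Sum>x<2 ^ Suc k. of_bool (dot_binary (Suc k) u x \<noteq> 0) :: nat) =
      (\<Sum>x<2 ^ k. of_bool (dot_binary k u x \<noteq> 0)) +
      (\<Sum>x<2 ^ k. of_bool (dot_binary k u x + u k \<noteq> 0))"
    by (fact sum_dot_binary_Suc[of "\<lambda>a b. of_bool (a \<noteq> 0)" k u u])
  show ?case
  proof (cases "u k = 0")
    case True
    with Suc.prems obtain i where "i < k" "u i \<noteq> 0" using less_Suc_eq by auto
    then have IH: "(\<Sum>x<2 ^ k. of_bool (dot_binary k u x \<noteq> 0) :: nat) = 2 ^ (k - 1)"
      using Suc.IH by blast
    have "2 ^ (k - 1) + 2 ^ (k - 1) = (2::nat) ^ k"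
      using \<open>i < k\<close> by (cases k) simp_all
    then show ?thesis using split True IH by (simp del: sum_of_bool_eq)
  next
    case False
    have "of_bool (a \<noteq> 0) + of_bool (a + 1 \<noteq> 0) = (1::nat)" for a :: bit
      by (cases a) (simp_all flip: one_add_one)
    then show ?thesis using split False by (simp add: sum.distrib[symmetric] del: sum_of_bool_eq)
  qed
qed

definition encode :: "nat \<Rightarrow> nat \<Rightarrow> bmat \<Rightarrow> (nat \<Rightarrow> bit) \<Rightarrow> bit list" where
  "encode k n M u = map (\<lambda>j. \<Sum>i<k. u i * M i j) [0..<n]"

lemma gen_code_eq_range_encode: "gen_code k n M = range (encode k n M)"
  by (auto simp: gen_code_def encode_def)

lemma length_encode [simp]: "length (encode k n M u) = n"
  by (simp add: encode_def)

lemma nth_encode [simp]: "j < n \<Longrightarrow> encode k n M u ! j = (\<Sum>i<k. u i * M i j)"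
  by (simp add: encode_def)

lemma encode_eq_zero: "\<forall>i<k. u i = 0 \<Longrightarrow> encode k n M u = replicate n 0"
  by (simp add: encode_def map_replicate_const)

lemma map2_add_encode: "map2 (+) (encode k n M u) (encode k n M v) = encode k n M (\<lambda>i. u i + v i)"
  by (rule nth_equalityI) (simp_all add: sum.distrib distrib_right)

lemma weight_append: "weight (xs @ ys) = weight xs + weight ys"
  by (simp add: weight_def)

lemma weight_concat_replicate: "weight (concat (replicate m xs)) = m * weight xs"
  by (induction m) (simp_all add: weight_append, simp add: weight_def)

lemma weight_map_upt: "weight (map f [0..<n]) = (\<Sum>j<n. of_bool (f j \<noteq> 0))"
  by (induction n) (simp_all add: weight_def del: sum_of_bool_eq)

lemma inner_append:
  "length xs = length xs' \<Longrightarrow> length ys = length ys' \<Longrightarrow>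
    inner (xs @ ys) (xs' @ ys') = inner xs xs' + inner ys ys'"
  unfolding inner_def
  using sum_lessThan_add[of "\<lambda>i. (xs @ ys) ! i * (xs' @ ys') ! i" "length xs" "length ys"]
  by (simp add: nth_append add.commute)

lemma inner_concat_replicate:
  "length xs = length ys \<Longrightarrow>
    inner (concat (replicate m xs)) (concat (replicate m ys)) = of_nat m * inner xs ys"
  by (induction m) (simp_all add: inner_append length_concat algebra_simps, simp add: inner_def)

lemma simplex_mat_eq_binary_digit: "simplex_mat k i j = binary_digit (Suc j) i"
  by (simp add: simplex_mat_def binary_digit_def)

lemma sum_lessThan_pow2_shift:
  "(\<Sum>x<2 ^ k. f x) = f 0 + (\<Sum>j<2 ^ k - 1. f (Suc j))" for f :: "nat \<Rightarrow> 'a::comm_monoid_add"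
  using sum.lessThan_Suc_shift[of f "2 ^ k - 1"] by simp

lemma weight_encode_simplex_mat:
  assumes "\<exists>i<k. u i \<noteq> 0"
  shows "weight (encode k (2 ^ k - 1) (simplex_mat k) u) = 2 ^ (k - 1)"
proof -
  have "weight (encode k (2 ^ k - 1) (simplex_mat k) u) =
      (\<Sum>j<2 ^ k - 1. of_bool (dot_binary k u (Suc j) \<noteq> 0))"
    by (simp add: encode_def weight_map_upt simplex_mat_eq_binary_digit dot_binary_def
        del: sum_of_bool_eq)
  also have "\<dots> = (\<Sum>x<2 ^ k. of_bool (dot_binary k u x \<noteq> 0))"
    by (simp add: sum_lessThan_pow2_shift[of _ k] del: sum_of_bool_eq)
  finally show ?thesis using count_dot_binary_nonzero[OF assms] by simp
qed

lemma inner_encode_simplex_mat: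
  assumes "3 \<le> k"
  shows "inner (encode k (2 ^ k - 1) (simplex_mat k) u) (encode k (2 ^ k - 1) (simplex_mat k) v) = 0"
proof -
  have "inner (encode k (2 ^ k - 1) (simplex_mat k) u) (encode k (2 ^ k - 1) (simplex_mat k) v) =
      (\<Sum>j<2 ^ k - 1. dot_binary k u (Suc j) * dot_binary k v (Suc j))"
    by (simp add: inner_def simplex_mat_eq_binary_digit dot_binary_def)
  also have "\<dots> = (\<Sum>x<2 ^ k. dot_binary k u x * dot_binary k v x)"
    by (simp add: sum_lessThan_pow2_shift[of _ k])
  finally show ?thesis using sum_dot_binary_mult[OF assms] by simp
qed

lemma map_upt_replicate_blocks:
  assumes "\<And>j. f j = (if j < m * L then g (j mod L) else h (j - m * L))"
  shows "map f [0..<m * L + n] = concat (replicate m (map g [0..<L])) @ map h [0..<n]"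
  using assms
proof (induction m arbitrary: f)
  case 0
  then show ?case by simp
next
  case (Suc m)
  have "[0..<Suc m * L + n] = [0..<L] @ map (\<lambda>j. j + L) [0..<m * L + n]"
    by (simp add: map_add_upt upt_add_eq_append[symmetric] add.commute add.left_commute)
  moreover have "map (\<lambda>j. f (j + L)) [0..<m * L + n] =
      concat (replicate m (map g [0..<L])) @ map h [0..<n]"
    by (rule Suc.IH) (use Suc.prems in auto)
  moreover have "map f [0..<L] = map g [0..<L]"
    using Suc.prems by auto
  ultimately show ?case by (simp add: o_def)
qed

lemma encode_ext_mat:
  "encode k (m * (2 ^ k - 1) + n) (ext_mat k m G) u =
    concat (replicate m (encode k (2 ^ k - 1) (simplex_mat k) u)) @ encode k n G u"
  unfolding encode_def by (rule map_upt_replicate_blocks) (simp add: ext_mat_def)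

lemma drop_encode_ext_mat:
  "drop (m * (2 ^ k - 1)) (encode k (m * (2 ^ k - 1) + n) (ext_mat k m G) u) = encode k n G u"
  unfolding encode_ext_mat by (simp add: length_concat sum_list_replicate)

lemma inner_encode_ext_mat:
  assumes "3 \<le> k"
  shows "inner (encode k (m * (2 ^ k - 1) + n) (ext_mat k m G) u)
      (encode k (m * (2 ^ k - 1) + n) (ext_mat k m G) v) = inner (encode k n G u) (encode k n G v)"
  unfolding encode_ext_mat using inner_encode_simplex_mat[OF assms]
  by (simp add: inner_append inner_concat_replicate length_concat sum_list_replicate)

lemma weight_encode_ext_mat:
  assumes "\<exists>i<k. u i \<noteq> 0"
  shows "weight (encode k (m * (2 ^ k - 1) + n) (ext_mat k m G) u) =
    2 ^ (k - 1) * m + weight (encode k n G u)"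
  unfolding encode_ext_mat weight_append weight_concat_replicate weight_encode_simplex_mat[OF assms]
  by simp

lemma self_orthogonal_gen_code_iff:
  "self_orthogonal (gen_code k n M) \<longleftrightarrow> (\<forall>u v. inner (encode k n M u) (encode k n M v) = 0)"
  by (auto simp: self_orthogonal_def gen_code_eq_range_encode)

lemma self_orthogonal_ext_mat_iff:
  "3 \<le> k \<Longrightarrow> self_orthogonal (gen_code k (m * (2 ^ k - 1) + n) (ext_mat k m G)) \<longleftrightarrow>
    self_orthogonal (gen_code k n G)"
  by (simp only: self_orthogonal_gen_code_iff inner_encode_ext_mat)

definition messages :: "nat \<Rightarrow> (nat \<Rightarrow> bit) set" where
  "messages k = {..<k} \<rightarrow>\<^sub>E UNIV"

lemma UNIV_bit: "(UNIV :: bit set) = {0, 1}"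
  using bit.exhaust by blast

lemma card_messages: "card (messages k) = 2 ^ k"
  by (simp add: messages_def card_funcsetE UNIV_bit numeral_2_eq_2)

lemma encode_restrict: "encode k n M (restrict u {..<k}) = encode k n M u"
  by (simp add: encode_def)

lemma gen_code_eq_image_messages: "gen_code k n M = encode k n M ` messages k"
proof -
  have "encode k n M u \<in> encode k n M ` messages k" for u
  proof -
    have "restrict u {..<k} \<in> messages k" by (simp add: messages_def)
    then show ?thesis by (metis encode_restrict image_eqI)
  qed
  then show ?thesis by (auto simp: gen_code_eq_range_encode)
qed

lemma finite_messages: "finite (messages k)"
  by (simp add: messages_def finite_PiE UNIV_bit)

lemma card_gen_code_eq_iff_inj_on:
  "card (gen_code k n M) = 2 ^ k \<longleftrightarrow> inj_on (encode k n M) (messages k)"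
  unfolding gen_code_eq_image_messages
  using card_image eq_card_imp_inj_on[OF finite_messages] card_messages by metis

lemma encode_eq_zero_iff:
  assumes "inj_on (encode k n M) (messages k)"
  shows "encode k n M u = replicate n 0 \<longleftrightarrow> (\<forall>i<k. u i = 0)"
proof
  assume "encode k n M u = replicate n 0"
  then have "encode k n M (restrict u {..<k}) = encode k n M (restrict (\<lambda>_. 0) {..<k})"
    by (simp add: encode_restrict encode_eq_zero)
  then have "restrict u {..<k} = restrict (\<lambda>_. 0) {..<k}"
    by (rule inj_onD[OF assms]) (simp_all add: messages_def)
  then show "\<forall>i<k. u i = 0" by (metis lessThan_iff restrict_apply')
qed (rule encode_eq_zero)

lemma gen_code_minus_zero:
  "inj_on (encode k n M) (messages k) \<Longrightarrow>
    gen_code k n M - {replicate n 0} = encode k n M ` {u. \<exists>i<k. u i \<noteq> 0}"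
  by (auto simp: gen_code_eq_range_encode encode_eq_zero_iff)

lemma is_code_gen_code_iff:
  "is_code (gen_code k n M) n k d \<longleftrightarrow>
    inj_on (encode k n M) (messages k) \<and> d = Min (weight ` (gen_code k n M - {replicate n 0}))"
proof -
  have "replicate n 0 \<in> gen_code k n M"
    using encode_eq_zero[of k "\<lambda>_. 0"] by (metis gen_code_eq_range_encode rangeI)
  moreover have "\<forall>x\<in>gen_code k n M. \<forall>y\<in>gen_code k n M. map2 (+) x y \<in> gen_code k n M"
    by (auto simp: gen_code_eq_range_encode map2_add_encode)
  moreover have "\<forall>v\<in>gen_code k n M. length v = n"
    by (simp add: gen_code_eq_range_encode)
  ultimately show ?thesis
    unfolding is_code_def card_gen_code_eq_iff_inj_on by blast
qed

lemma inj_on_encode_ext_mat: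
  "inj_on (encode k n G) (messages k) \<Longrightarrow>
    inj_on (encode k (m * (2 ^ k - 1) + n) (ext_mat k m G)) (messages k)"
  unfolding inj_on_def by (metis drop_encode_ext_mat)

lemma min_weight_ext_mat:
  assumes "1 \<le> k" and inj: "inj_on (encode k n G) (messages k)"
  shows "Min (weight ` (gen_code k (m * (2 ^ k - 1) + n) (ext_mat k m G)
      - {replicate (m * (2 ^ k - 1) + n) 0})) =
    2 ^ (k - 1) * m + Min (weight ` (gen_code k n G - {replicate n 0}))"
proof -
  define W where "W = weight ` (gen_code k n G - {replicate n 0})"
  have "weight ` (gen_code k (m * (2 ^ k - 1) + n) (ext_mat k m G)
      - {replicate (m * (2 ^ k - 1) + n) 0}) = (\<lambda>w. 2 ^ (k - 1) * m + w) ` W"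
    unfolding W_def gen_code_minus_zero[OF inj] image_image
      gen_code_minus_zero[OF inj_on_encode_ext_mat[OF inj]]
    by (intro image_cong refl) (rule weight_encode_ext_mat, simp)
  moreover have "finite W"
    by (simp add: W_def gen_code_eq_image_messages finite_messages)
  moreover have "W \<noteq> {}"
  proof -
    have "(\<lambda>_. 1) \<in> {u. \<exists>i<k. u i \<noteq> (0::bit)}"
      using \<open>1 \<le> k\<close> by (auto intro!: exI[of _ 0])
    then show ?thesis by (auto simp: W_def gen_code_minus_zero[OF inj])
  qed
  ultimately show ?thesis
    unfolding W_def[symmetric] by (simp add: mono_Min_commute[symmetric] mono_def)
qed

lemma is_code_ext_mat:
  assumes "1 \<le> k" and "is_code (gen_code k n G) n k d"
  shows "is_code (gen_code k (m * (2 ^ k - 1) + n) (ext_mat k m G)) (m * (2 ^ k - 1) + n) k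
    (2 ^ (k - 1) * m + d)"
proof -
  have inj: "inj_on (encode k n G) (messages k)"
    and d: "d = Min (weight ` (gen_code k n G - {replicate n 0}))"
    using assms(2) by (simp_all add: is_code_gen_code_iff)
  show ?thesis
    unfolding is_code_gen_code_iff d min_weight_ext_mat[OF assms(1) inj]
    using inj_on_encode_ext_mat[OF inj] by simp
qed

lemma griesmer_add_simplex:
  assumes "1 \<le> k"
  shows "griesmer k (2 ^ (k - 1) * m + d) = m * (2 ^ k - 1) + griesmer k d"
proof -
  have term_shift: "(2 ^ (k - 1) * m + d + 2 ^ i - 1) div 2 ^ i =
      2 ^ (k - Suc i) * m + (d + 2 ^ i - 1) div 2 ^ i" if "i < k" for i
  proof -
    have "(2::nat) ^ (k - 1) * m = (2 ^ (k - Suc i) * m) * 2 ^ i"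
      using that by (simp flip: power_add add: mult_ac)
    moreover have "(1::nat) \<le> 2 ^ i" by simp
    ultimately have "2 ^ (k - 1) * m + d + 2 ^ i - 1 =
        (d + 2 ^ i - 1) + (2 ^ (k - Suc i) * m) * (2::nat) ^ i"
      by linarith
    then show ?thesis by simp
  qed
  have "griesmer k (2 ^ (k - 1) * m + d) =
      (\<Sum>i<k. 2 ^ (k - Suc i) * m + (d + 2 ^ i - 1) div 2 ^ i)"
    unfolding griesmer_def by (intro sum.cong refl term_shift) simp
  also have "\<dots> = (\<Sum>i<k. 2 ^ (k - Suc i)) * m + griesmer k d"
    by (simp add: sum.distrib sum_distrib_right griesmer_def)
  also have "(\<Sum>i<k. (2::nat) ^ (k - Suc i)) = 2 ^ k - 1"
    using sum_power2[of k] by (simp add: sum.nat_diff_reindex atLeast0LessThan)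
  finally show ?thesis by simp
qed

lemma griesmer_optimal_add_simplex_iff:
  assumes "1 \<le> k"
  shows "griesmer_optimal (m * (2 ^ k - 1) + n) k (2 ^ (k - 1) * m + d) \<longleftrightarrow> griesmer_optimal n k d"
proof -
  have "griesmer k (2 ^ (k - 1) * m + d + 1) = m * (2 ^ k - 1) + griesmer k (d + 1)"
    using griesmer_add_simplex[OF assms, of m "d + 1"] by (simp only: add.assoc)
  then show ?thesis
    unfolding griesmer_optimal_def griesmer_add_simplex[OF assms] by simp
qed

lemma griesmer_code_add_simplex_iff:
  "1 \<le> k \<Longrightarrow> griesmer_code (m * (2 ^ k - 1) + n) k (2 ^ (k - 1) * m + d) \<longleftrightarrow> griesmer_code n k d"
  unfolding griesmer_code_def by (simp only: griesmer_add_simplex) simp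

theorem theorem3p4:
  fixes k n d m :: nat and G :: bmat
  assumes "k \<ge> 3"
    and "is_code (gen_code k n G) n k d"
  shows "((self_orthogonal (gen_code k n G) \<and> is_code (gen_code k n G) n k d
            \<and> griesmer_optimal n k d)
          \<longleftrightarrow>
          (self_orthogonal (gen_code k (m * (2 ^ k - 1) + n) (ext_mat k m G))
            \<and> is_code (gen_code k (m * (2 ^ k - 1) + n) (ext_mat k m G))
                 (m * (2 ^ k - 1) + n) k (2 ^ (k - 1) * m + d)
            \<and> griesmer_optimal (m * (2 ^ k - 1) + n) k (2 ^ (k - 1) * m + d)))
       \<and> ((self_orthogonal (gen_code k n G) \<and> griesmer_code n k d)
          \<longleftrightarrow>
          (self_orthogonal (gen_code k (m * (2 ^ k - 1) + n) (ext_mat k m G))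
            \<and> griesmer_code (m * (2 ^ k - 1) + n) k
                 (Min (weight ` (gen_code k (m * (2 ^ k - 1) + n) (ext_mat k m G)
                         - {replicate (m * (2 ^ k - 1) + n) 0})))))"
proof -
  have "1 \<le> k" using assms(1) by simp
  have code': "is_code (gen_code k (m * (2 ^ k - 1) + n) (ext_mat k m G))
      (m * (2 ^ k - 1) + n) k (2 ^ (k - 1) * m + d)"
    using is_code_ext_mat[OF \<open>1 \<le> k\<close> assms(2)] .
  then have "Min (weight ` (gen_code k (m * (2 ^ k - 1) + n) (ext_mat k m G)
      - {replicate (m * (2 ^ k - 1) + n) 0})) = 2 ^ (k - 1) * m + d"
    by (simp add: is_code_def)
  then show ?thesis
    using assms(2) code' self_orthogonal_ext_mat_iff[OF assms(1)]
      griesmer_optimal_add_simplex_iff[OF \<open>1 \<le> k\<close>]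
      griesmer_code_add_simplex_iff[OF \<open>1 \<le> k\<close>]
    by simp
qed

end
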